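(* Let $f\colon\mathbb{R}\to\mathbb{R}$ be a smooth function such that $f$ and $\dot f$ are bounded on $\mathbb{R}$, and let $g\colon\mathbb{R}\to\mathbb{R}$ be a smooth periodic function with period $T>0$ and zero mean, $\frac1T\int_0^T g(t)\,dt=0$. For $\lambda>0$ consider the equation $$\ddot x=f(t)\sin x-(1+g(\lambda t))\cos x .$$ Then there exists $\lambda_0$ such that for every $\lambda\geqslant\lambda_0$ this equation has a solution $x(t)$ satisfying $x(t)\in(0,\pi)$ for all $t>0$.
   Context: The equation describes an inverted pendulum with a horizontally moving pivot point (horizontal forcing $f(t)$) in a gravity field oscillating as $1+g(\lambda t)$. *)

theory Defs
  imports "HOL-Analysis.Analysis"
begin

definition smooth_fun :: "(real \<Rightarrow> real) \<Rightarrow> bool" where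
  "smooth_fun h \<longleftrightarrow> (\<forall>n. \<forall>t. ((deriv ^^ n) h) differentiable (at t))"

end

theory Submission
  imports Defs
begin

text \<open>
Let \<open>G\<close> be a bounded function with \<open>G'' = g\<close>; it exists because \<open>g\<close> has mean zero, so that a
primitive of \<open>g\<close>, corrected by its mean slope, is again periodic. Put \<open>J t = G (\<lambda> t) / \<lambda>\<^sup>2\<close>, so
\<open>J'' = g (\<lambda> t)\<close> and \<open>\<bar>J\<bar> \<le> sup \<bar>G\<bar> / \<lambda>\<^sup>2\<close>. Along a solution \<open>x\<close> we get
\<open>(x + J)'' = f sin x - cos x + g (\<lambda> t) (1 - cos x)\<close>: the fast forcing only enters with the factor
\<open>1 - cos x\<close>. Choosing \<open>\<delta>\<close> small in terms of \<open>sup \<bar>f\<bar>\<close> and \<open>sup \<bar>g\<bar>\<close>, and \<open>\<lambda>\<close> so large that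
\<open>\<bar>J\<bar> \<le> \<delta> / 2\<close>, the function \<open>x + J\<close> is strictly concave while \<open>\<bar>x\<bar> \<le> 2 \<delta>\<close>, so it can reach the
level \<open>\<delta>\<close> only by crossing it. The same holds for \<open>(pi - x) + J\<close>, since \<open>pi - x\<close> solves the
equation with \<open>f\<close> replaced by \<open>-f\<close>.

Now shoot from \<open>x 0 = pi / 2\<close> with initial velocity \<open>v\<close>. The velocities for which \<open>x + J\<close> falls
below \<open>\<delta>\<close> before \<open>x - J\<close> reaches \<open>pi - \<delta>\<close>, and those for which the reverse happens, form two
disjoint open sets (by continuous dependence on \<open>v\<close>), each containing all sufficiently large
velocities of the corresponding sign. As \<open>\<real>\<close> is connected, some \<open>v\<close> lies in neither set, and
by the crossing property its solution never leaves the strip \<open>\<delta> < x + J, x - J < pi - \<delta>\<close>.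
Solutions and their continuous dependence come from Picard iteration, the right-hand side
being bounded and globally Lipschitz in \<open>x\<close>.
\<close>

lemma abs_diff_le_diff_if_abs_deriv_le:
  fixes u v :: "real \<Rightarrow> real"
  assumes "a \<le> b"
    and u: "\<And>s. s \<in> {a..b} \<Longrightarrow> (u has_real_derivative u' s) (at s)"
    and v: "\<And>s. s \<in> {a..b} \<Longrightarrow> (v has_real_derivative v' s) (at s)"
    and le: "\<And>s. s \<in> {a..b} \<Longrightarrow> \<bar>u' s\<bar> \<le> v' s"
  shows "\<bar>u b - u a\<bar> \<le> v b - v a"
proof -
  have "v a - u a \<le> v b - u b"
    by (rule deriv_nonneg_imp_mono[where g = "\<lambda>s. v s - u s" and g' = "\<lambda>s. v' s - u' s"])
       (use assms in \<open>force intro!: DERIV_diff simp: abs_le_iff\<close>)+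
  moreover have "v a + u a \<le> v b + u b"
    by (rule deriv_nonneg_imp_mono[where g = "\<lambda>s. v s + u s" and g' = "\<lambda>s. v' s + u' s"])
       (use assms in \<open>force intro!: DERIV_add simp: abs_le_iff\<close>)+
  ultimately show ?thesis by linarith
qed

lemma abs_le_power_if_abs_deriv_le:
  fixes u u' :: "real \<Rightarrow> real"
  assumes "u 0 = 0"
    and u: "\<And>s. \<bar>s\<bar> \<le> \<bar>t\<bar> \<Longrightarrow> (u has_real_derivative u' s) (at s)"
    and le: "\<And>s. \<bar>s\<bar> \<le> \<bar>t\<bar> \<Longrightarrow> \<bar>u' s\<bar> \<le> c * \<bar>s\<bar> ^ m"
  shows "\<bar>u t\<bar> \<le> c * \<bar>t\<bar> ^ Suc m / Suc m"
proof (cases "0 \<le> t")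
  case True
  have "\<bar>u t - u 0\<bar> \<le> c * t ^ Suc m / Suc m - c * 0 ^ Suc m / Suc m"
  proof (rule abs_diff_le_diff_if_abs_deriv_le[OF True])
    fix s assume "s \<in> {0..t}"
    then show "(u has_real_derivative u' s) (at s)" "\<bar>u' s\<bar> \<le> c * s ^ m"
      using u[of s] le[of s] True by auto
    show "((\<lambda>s. c * s ^ Suc m / Suc m) has_real_derivative c * s ^ m) (at s)"
      by (auto intro!: derivative_eq_intros simp del: power_Suc)
  qed
  then show ?thesis using True \<open>u 0 = 0\<close> by simp
next
  case False
  have "\<bar>u 0 - u t\<bar> \<le> - c * (- 0) ^ Suc m / Suc m - - c * (- t) ^ Suc m / Suc m"
  proof (rule abs_diff_le_diff_if_abs_deriv_le)
    fix s assume "s \<in> {t..0}"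
    then show "(u has_real_derivative u' s) (at s)" "\<bar>u' s\<bar> \<le> c * (- s) ^ m"
      using u[of s] le[of s] False by auto
    show "((\<lambda>s. - c * (- s) ^ Suc m / Suc m) has_real_derivative c * (- s) ^ m) (at s)"
      by (auto intro!: derivative_eq_intros simp del: power_Suc)
  qed (use False in simp)
  then show ?thesis using False \<open>u 0 = 0\<close> by simp
qed

lemma abs_le_power_if_abs_deriv2_le:
  fixes u u' u'' :: "real \<Rightarrow> real"
  assumes "u 0 = 0" "u' 0 = 0"
    and u: "\<And>s. \<bar>s\<bar> \<le> \<bar>t\<bar> \<Longrightarrow> (u has_real_derivative u' s) (at s)"
    and u': "\<And>s. \<bar>s\<bar> \<le> \<bar>t\<bar> \<Longrightarrow> (u' has_real_derivative u'' s) (at s)"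
    and le: "\<And>s. \<bar>s\<bar> \<le> \<bar>t\<bar> \<Longrightarrow> \<bar>u'' s\<bar> \<le> c * \<bar>s\<bar> ^ m"
  shows "\<bar>u t\<bar> \<le> c * \<bar>t\<bar> ^ Suc (Suc m) / (Suc m * Suc (Suc m))"
proof -
  have "\<bar>u' s\<bar> \<le> c * \<bar>s\<bar> ^ Suc m / Suc m" if "\<bar>s\<bar> \<le> \<bar>t\<bar>" for s
    by (rule abs_le_power_if_abs_deriv_le[of u' s u'']) (use assms that in auto)
  then have "\<bar>u t\<bar> \<le> c / Suc m * \<bar>t\<bar> ^ Suc (Suc m) / Suc (Suc m)"
    by (intro abs_le_power_if_abs_deriv_le[of u t u'] assms) auto
  then show ?thesis by (simp add: field_simps)
qed

lemma continuous_on_if_derivative: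
  "(\<And>t. (u has_real_derivative u' t) (at t)) \<Longrightarrow> continuous_on UNIV u"
  using DERIV_continuous_on[of UNIV u u'] by simp

lemma differential_gronwall:
  fixes E E' :: "real \<Rightarrow> real"
  assumes "\<And>s. (E has_real_derivative E' s) (at s)" "\<And>s. E' s \<le> c * E s" "0 \<le> t"
  shows "E t \<le> E 0 * exp (c * t)"
proof -
  have "E t * exp (- c * t) \<le> E 0 * exp (- c * 0)"
  proof (rule deriv_nonpos_imp_antimono[where g = "\<lambda>s. E s * exp (- c * s)"
        and g' = "\<lambda>s. (E' s - c * E s) * exp (- c * s)"])
    fix s
    show "((\<lambda>s. E s * exp (- c * s)) has_real_derivative (E' s - c * E s) * exp (- c * s)) (at s)"
      by (auto intro!: derivative_eq_intros assms(1) simp: algebra_simps)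
    show "(E' s - c * E s) * exp (- c * s) \<le> 0"
      using assms(2)[of s] by (simp add: mult_nonpos_nonneg)
  qed (use assms(3) in simp)
  then show ?thesis by (simp add: exp_minus field_simps)
qed

lemma midpoint_le_if_deriv2_nonpos:
  fixes w w' w'' :: "real \<Rightarrow> real"
  assumes "\<And>s. s \<in> ball c e \<Longrightarrow> (w has_real_derivative w' s) (at s)"
    and "\<And>s. s \<in> ball c e \<Longrightarrow> (w' has_real_derivative w'' s) (at s)"
    and "\<And>s. s \<in> ball c e \<Longrightarrow> w'' s \<le> 0" and "\<bar>r\<bar> < e"
  shows "w (c + r) + w (c - r) \<le> 2 * w c"
proof -
  have "convex_on (ball c e) (\<lambda>s. - w s)"
    by (rule f''_ge0_imp_convex[where f' = "\<lambda>s. - w' s" and f'' = "\<lambda>s. - w'' s"])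
       (use assms in \<open>auto intro!: derivative_eq_intros\<close>)
  from convex_onD[OF this, of "1/2" "c + r" "c - r"] assms(4)
  have "w (c + r) / 2 + w (c - r) / 2 \<le> w ((c + r) / 2 + (c - r) / 2)"
    by (simp add: dist_real_def algebra_simps)
  also have "(c + r) / 2 + (c - r) / 2 = c" by (simp add: field_simps)
  finally show ?thesis by simp
qed

lemma first_hitting_time:
  fixes P :: "real \<Rightarrow> bool"
  assumes "closed {t. P t}" "0 \<le> t" "P t" "\<not> P 0"
  obtains t1 where "0 < t1" "P t1" "\<And>s. 0 \<le> s \<Longrightarrow> s < t1 \<Longrightarrow> \<not> P s"
proof -
  let ?Z = "{t. P t} \<inter> {0..}"
  have Inf: "Inf ?Z \<in> ?Z"
    using assms by (intro closed_contains_Inf closed_Int) (auto intro: bdd_belowI[of _ 0])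
  have lower: "Inf ?Z \<le> s" if "s \<in> ?Z" for s
    using that by (intro cInf_lower) (auto intro: bdd_belowI[of _ 0])
  show thesis
  proof (rule that)
    show "0 < Inf ?Z" using Inf assms(4) by (cases "Inf ?Z = 0") auto
    show "P (Inf ?Z)" using Inf by simp
    fix s assume "0 \<le> s" "s < Inf ?Z"
    then show "\<not> P s" using lower[of s] by auto
  qed
qed

lemma summable_power_over_fact_double: "summable (\<lambda>k. x ^ k / fact (2 * k + 2) :: real)"
proof (rule summable_comparison_test')
  show "summable (\<lambda>k. \<bar>x\<bar> ^ k / fact k)"
    using summable_exp[of "\<bar>x\<bar>"] by (simp add: field_simps)
  show "norm (x ^ k / fact (2 * k + 2)) \<le> \<bar>x\<bar> ^ k / fact k" for k
  proof -
    have "fact k \<le> (fact (2 * k + 2) :: real)" by (rule fact_mono) simp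
    then show ?thesis by (simp add: power_abs divide_left_mono)
  qed
qed

section \<open>Primitives of continuous functions\<close>

text \<open>The interval integral is signed, so for \<open>t < 0\<close> this is minus the integral over \<open>{t..0}\<close>.\<close>

definition primitive :: "(real \<Rightarrow> real) \<Rightarrow> real \<Rightarrow> real" where
  "primitive \<phi> t = (LBINT s=ereal 0..t. \<phi> s)"

lemma primitive_zero [simp]: "primitive \<phi> 0 = 0"
  by (simp add: primitive_def)

lemma has_real_derivative_primitive:
  assumes "continuous_on UNIV \<phi>"
  shows "(primitive \<phi> has_real_derivative \<phi> t) (at t)"
proof -
  let ?I = "{- (\<bar>t\<bar> + 1) .. \<bar>t\<bar> + 1}"
  have "((\<lambda>u. LBINT s=ereal 0..u. \<phi> s) has_vector_derivative \<phi> t) (at t within ?I)"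
    using interval_integral_FTC2[of "- (\<bar>t\<bar> + 1)" 0 "\<bar>t\<bar> + 1" \<phi> t] assms
    by (simp add: continuous_on_subset abs_le_iff)
  then have "(primitive \<phi> has_vector_derivative \<phi> t) (at t within ?I)"
    unfolding primitive_def .
  moreover have "t \<in> interior ?I" by auto
  ultimately show ?thesis
    using at_within_interior[of t ?I] has_real_derivative_iff_has_vector_derivative by metis
qed

lemma continuous_on_primitive: "continuous_on UNIV \<phi> \<Longrightarrow> continuous_on UNIV (primitive \<phi>)"
  by (rule continuous_on_if_derivative[OF has_real_derivative_primitive])

lemma abs_primitive2_diff_le:
  assumes "continuous_on UNIV \<phi>" "continuous_on UNIV \<psi>"
    and "\<And>s. \<bar>s\<bar> \<le> \<bar>t\<bar> \<Longrightarrow> \<bar>\<phi> s - \<psi> s\<bar> \<le> c * \<bar>s\<bar> ^ m"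
  shows "\<bar>primitive (primitive \<phi>) t - primitive (primitive \<psi>) t\<bar>
           \<le> c * \<bar>t\<bar> ^ Suc (Suc m) / (Suc m * Suc (Suc m))"
  by (rule abs_le_power_if_abs_deriv2_le[where u' = "\<lambda>s. primitive \<phi> s - primitive \<psi> s"])
     (use assms in \<open>auto intro!: DERIV_diff has_real_derivative_primitive continuous_on_primitive\<close>)

lemma uniform_limit_primitive:
  assumes cont: "\<And>k. continuous_on UNIV (\<phi> k)" "continuous_on UNIV \<psi>"
    and lim: "uniform_limit {-N..N} \<phi> \<psi> sequentially"
  shows "uniform_limit {-N..N} (\<lambda>k. primitive (\<phi> k)) (primitive \<psi>) sequentially"
proof (rule uniform_limitI)
  fix e :: real assume "0 < e"
  then have "0 < e / (\<bar>N\<bar> + 1)" by simp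
  with lim have "\<forall>\<^sub>F k in sequentially. \<forall>s\<in>{-N..N}. dist (\<phi> k s) (\<psi> s) < e / (\<bar>N\<bar> + 1)"
    by (rule uniform_limitD)
  then show "\<forall>\<^sub>F k in sequentially. \<forall>t\<in>{-N..N}. dist (primitive (\<phi> k) t) (primitive \<psi> t) < e"
  proof eventually_elim
    case (elim k)
    show ?case
    proof
      fix t :: real assume t: "t \<in> {-N..N}"
      have "\<bar>primitive (\<phi> k) t - primitive \<psi> t\<bar> \<le> e / (\<bar>N\<bar> + 1) * \<bar>t\<bar>"
      proof (rule abs_le_power_if_abs_deriv_le[where m = 0, simplified])
        fix s :: real assume "\<bar>s\<bar> \<le> \<bar>t\<bar>"
        with t have "s \<in> {-N..N}" by (auto simp: abs_le_iff)
        with elim show "\<bar>\<phi> k s - \<psi> s\<bar> \<le> e / (\<bar>N\<bar> + 1)"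
          by (auto simp: dist_real_def less_imp_le)
        show "((\<lambda>t. primitive (\<phi> k) t - primitive \<psi> t) has_real_derivative \<phi> k s - \<psi> s) (at s)"
          by (intro DERIV_diff has_real_derivative_primitive cont)
      qed simp
      also have "\<dots> = e * (\<bar>t\<bar> / (\<bar>N\<bar> + 1))" by simp
      also have "\<dots> < e * 1" using t \<open>0 < e\<close> by (intro mult_strict_left_mono) auto
      finally show "dist (primitive (\<phi> k) t) (primitive \<psi> t) < e"
        by (simp add: dist_real_def)
    qed
  qed
qed

section \<open>Second-order equations with a bounded Lipschitz right-hand side\<close>

definition solves_ode2 :: "(real \<Rightarrow> real \<Rightarrow> real) \<Rightarrow> (real \<Rightarrow> real) \<Rightarrow> (real \<Rightarrow> real) \<Rightarrow> bool"
  where "solves_ode2 F x x' \<longleftrightarrow>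
    (\<forall>t. (x has_real_derivative x' t) (at t)) \<and> (\<forall>t. (x' has_real_derivative F t (x t)) (at t))"

lemma continuous_on_solves_ode2: "solves_ode2 F x x' \<Longrightarrow> continuous_on UNIV x"
  unfolding solves_ode2_def by (blast intro: continuous_on_if_derivative)

locale lipschitz_ode =
  fixes F :: "real \<Rightarrow> real \<Rightarrow> real" and L B :: real
  assumes continuous_F: "continuous_on UNIV (\<lambda>(t, x). F t x)"
    and lipschitz_F: "\<And>t x y. \<bar>F t x - F t y\<bar> \<le> L * \<bar>x - y\<bar>"
    and bounded_F: "\<And>t x. \<bar>F t x\<bar> \<le> B"
begin

lemma L_nonneg: "0 \<le> L"
  using lipschitz_F[of 0 1 0] by simp

lemma B_nonneg: "0 \<le> B"
  using bounded_F[of 0 0] by simp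

lemma continuous_on_F_along:
  assumes "continuous_on UNIV u"
  shows "continuous_on UNIV (\<lambda>t. F t (u t))"
proof -
  have "continuous_on UNIV ((\<lambda>(t, x). F t x) \<circ> (\<lambda>t. (t, u t)))"
    by (intro continuous_on_compose continuous_intros assms continuous_on_subset[OF continuous_F]) auto
  then show ?thesis by (simp add: o_def)
qed

lemma uniform_limit_F_along:
  assumes "uniform_limit S u w sequentially"
  shows "uniform_limit S (\<lambda>k s. F s (u k s)) (\<lambda>s. F s (w s)) sequentially"
proof (rule uniform_limitI)
  fix e :: real assume "0 < e"
  then have "0 < e / (L + 1)" using L_nonneg by simp
  with assms have "\<forall>\<^sub>F k in sequentially. \<forall>s\<in>S. dist (u k s) (w s) < e / (L + 1)"
    by (rule uniform_limitD)
  then show "\<forall>\<^sub>F k in sequentially. \<forall>s\<in>S. dist (F s (u k s)) (F s (w s)) < e"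
  proof eventually_elim
    case (elim k)
    show ?case
    proof
      fix s assume "s \<in> S"
      have "\<bar>F s (u k s) - F s (w s)\<bar> \<le> L * \<bar>u k s - w s\<bar>" by (rule lipschitz_F)
      also have "\<dots> \<le> L * (e / (L + 1))"
        using elim \<open>s \<in> S\<close> L_nonneg by (intro mult_left_mono) (auto simp: dist_real_def less_imp_le)
      also have "\<dots> < e" using \<open>0 < e\<close> L_nonneg by (simp add: field_simps)
      finally show "dist (F s (u k s)) (F s (w s)) < e" by (simp add: dist_real_def)
    qed
  qed
qed

primrec picard :: "real \<Rightarrow> real \<Rightarrow> nat \<Rightarrow> real \<Rightarrow> real" where
  "picard a v 0 = (\<lambda>t. a + v * t)"
| "picard a v (Suc k) = (\<lambda>t. a + v * t + primitive (primitive (\<lambda>s. F s (picard a v k s))) t)"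

lemma continuous_on_picard: "continuous_on UNIV (picard a v k)"
  by (induction k) (auto intro!: continuous_intros continuous_on_primitive continuous_on_F_along)

lemma picard_step_le:
  "\<bar>picard a v (Suc k) t - picard a v k t\<bar> \<le> B * L ^ k * \<bar>t\<bar> ^ (2 * k + 2) / fact (2 * k + 2)"
proof (induction k arbitrary: t)
  case 0
  have "\<bar>primitive (primitive (\<lambda>s. F s (picard a v 0 s))) t - primitive (primitive (\<lambda>s. 0)) t\<bar>
        \<le> B * \<bar>t\<bar> ^ 2 / 2"
    using abs_primitive2_diff_le[of "\<lambda>s. F s (picard a v 0 s)" "\<lambda>s. 0" t B 0] bounded_F
      continuous_on_F_along[OF continuous_on_picard[of a v 0]]
    by (simp add: numeral_2_eq_2)
  then show ?case by (simp add: primitive_def power2_eq_square)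
next
  case (Suc k)
  let ?c = "L * (B * L ^ k / fact (2 * k + 2))"
  have "\<bar>F s (picard a v (Suc k) s) - F s (picard a v k s)\<bar> \<le> ?c * \<bar>s\<bar> ^ (2 * k + 2)" for s
  proof -
    have "\<bar>F s (picard a v (Suc k) s) - F s (picard a v k s)\<bar>
          \<le> L * \<bar>picard a v (Suc k) s - picard a v k s\<bar>"
      by (rule lipschitz_F)
    also have "\<dots> \<le> L * (B * L ^ k * \<bar>s\<bar> ^ (2 * k + 2) / fact (2 * k + 2))"
      by (rule mult_left_mono[OF Suc.IH L_nonneg])
    finally show ?thesis by simp
  qed
  then have "\<bar>primitive (primitive (\<lambda>s. F s (picard a v (Suc k) s))) t
             - primitive (primitive (\<lambda>s. F s (picard a v k s))) t\<bar>
             \<le> ?c * \<bar>t\<bar> ^ Suc (Suc (2 * k + 2)) / (Suc (2 * k + 2) * Suc (Suc (2 * k + 2)))"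
    by (intro abs_primitive2_diff_le continuous_on_F_along continuous_on_picard)
  then have "\<bar>picard a v (Suc (Suc k)) t - picard a v (Suc k) t\<bar>
             \<le> ?c * \<bar>t\<bar> ^ Suc (Suc (2 * k + 2)) / (Suc (2 * k + 2) * Suc (Suc (2 * k + 2)))"
    by (simp only: picard.simps add_diff_add)
  also have "\<dots> = B * L ^ Suc k * \<bar>t\<bar> ^ (2 * Suc k + 2) / fact (2 * Suc k + 2)"
    by (simp add: eval_nat_numeral fact_Suc field_simps)
  finally show ?case .
qed

definition picard_limit :: "real \<Rightarrow> real \<Rightarrow> real \<Rightarrow> real" where
  "picard_limit a v t = picard a v 0 t + (\<Sum>k. picard a v (Suc k) t - picard a v k t)"

lemma uniform_limit_picard: "uniform_limit {-N..N} (picard a v) (picard_limit a v) sequentially"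
proof -
  let ?M = "\<lambda>k. B * N\<^sup>2 * ((L * N\<^sup>2) ^ k / fact (2 * k + 2))"
  have "uniform_limit {-N..N} (\<lambda>n t. \<Sum>k<n. picard a v (Suc k) t - picard a v k t)
          (\<lambda>t. \<Sum>k. picard a v (Suc k) t - picard a v k t) sequentially"
  proof (rule Weierstrass_m_test[where M = ?M])
    fix k t assume "t \<in> {-N..N}"
    then have "\<bar>t\<bar> ^ (2 * k + 2) \<le> N ^ (2 * k + 2)" by (intro power_mono) auto
    then have "B * L ^ k * \<bar>t\<bar> ^ (2 * k + 2) / fact (2 * k + 2)
               \<le> B * L ^ k * N ^ (2 * k + 2) / fact (2 * k + 2)"
      using B_nonneg L_nonneg by (intro divide_right_mono mult_left_mono) auto
    also have "\<dots> = ?M k"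
      by (simp add: power_add power_mult power_mult_distrib power2_eq_square)
    finally have "B * L ^ k * \<bar>t\<bar> ^ (2 * k + 2) / fact (2 * k + 2) \<le> ?M k" .
    with picard_step_le[of a v k t] show "norm (picard a v (Suc k) t - picard a v k t) \<le> ?M k"
      by (simp only: real_norm_def)
  qed (intro summable_mult summable_power_over_fact_double)
  then have "uniform_limit {-N..N} (\<lambda>n t. picard a v 0 t + (\<Sum>k<n. picard a v (Suc k) t - picard a v k t))
               (picard_limit a v) sequentially"
    unfolding picard_limit_def by (intro uniform_limit_intros)
  moreover have "picard a v 0 t + (\<Sum>k<n. picard a v (Suc k) t - picard a v k t) = picard a v n t" for n t
    using sum_lessThan_telescope[of "\<lambda>k. picard a v k t" n] by simp
  ultimately show ?thesis by (simp only:)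
qed

lemma continuous_on_picard_limit: "continuous_on UNIV (picard_limit a v)"
proof -
  have "isCont (picard_limit a v) t" for t
  proof -
    have "continuous_on {- (\<bar>t\<bar> + 1)..\<bar>t\<bar> + 1} (picard_limit a v)"
      by (rule uniform_limit_theorem[OF _ uniform_limit_picard])
         (auto intro!: always_eventually continuous_on_subset[OF continuous_on_picard])
    moreover have "t \<in> interior {- (\<bar>t\<bar> + 1)..\<bar>t\<bar> + 1}" by auto
    ultimately show ?thesis by (rule continuous_on_interior)
  qed
  then show ?thesis by (simp add: continuous_at_imp_continuous_on)
qed

lemma picard_limit_eq:
  "picard_limit a v t = a + v * t + primitive (primitive (\<lambda>s. F s (picard_limit a v s))) t"
proof -
  let ?N = "\<bar>t\<bar>"
  have cont: "continuous_on UNIV (\<lambda>s. F s (picard a v k s))" for k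
    by (intro continuous_on_F_along continuous_on_picard)
  have "uniform_limit {-?N..?N} (\<lambda>k. primitive (primitive (\<lambda>s. F s (picard a v k s))))
          (primitive (primitive (\<lambda>s. F s (picard_limit a v s)))) sequentially"
    by (intro uniform_limit_primitive uniform_limit_F_along uniform_limit_picard cont
          continuous_on_primitive continuous_on_F_along continuous_on_picard_limit)
  then have "(\<lambda>k. primitive (primitive (\<lambda>s. F s (picard a v k s))) t)
               \<longlonglongrightarrow> primitive (primitive (\<lambda>s. F s (picard_limit a v s))) t"
    by (rule tendsto_uniform_limitI) (simp add: abs_if)
  then have "(\<lambda>k. picard a v (Suc k) t)
               \<longlonglongrightarrow> a + v * t + primitive (primitive (\<lambda>s. F s (picard_limit a v s))) t"
    by (simp only: picard.simps) (rule tendsto_add[OF tendsto_const])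
  moreover have "(\<lambda>k. picard a v (Suc k) t) \<longlonglongrightarrow> picard_limit a v t"
    using LIMSEQ_Suc[OF tendsto_uniform_limitI[OF uniform_limit_picard[where N = ?N], of t]]
    by (simp add: abs_if)
  ultimately show ?thesis by (rule LIMSEQ_unique[rotated])
qed

lemma solution_exists: "\<exists>x x'. x 0 = a \<and> x' 0 = v \<and> solves_ode2 F x x'"
proof (intro exI conjI)
  let ?\<phi> = "\<lambda>s. F s (picard_limit a v s)"
  have cont: "continuous_on UNIV ?\<phi>"
    by (intro continuous_on_F_along continuous_on_picard_limit)
  have eq: "picard_limit a v = (\<lambda>t. a + v * t + primitive (primitive ?\<phi>) t)"
    by (rule ext) (rule picard_limit_eq)
  show "picard_limit a v 0 = a" by (subst eq) simp
  show "(\<lambda>t. v + primitive ?\<phi> t) 0 = v" by simp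
  have "((\<lambda>t. a + v * t + primitive (primitive ?\<phi>) t) has_real_derivative v + primitive ?\<phi> t) (at t)"
    for t
    using has_real_derivative_primitive[OF continuous_on_primitive[OF cont], of t]
    by (auto intro!: derivative_eq_intros)
  moreover have "((\<lambda>t. v + primitive ?\<phi> t) has_real_derivative ?\<phi> t) (at t)" for t
    using has_real_derivative_primitive[OF cont, of t] by (auto intro!: derivative_eq_intros)
  ultimately show "solves_ode2 F (picard_limit a v) (\<lambda>t. v + primitive ?\<phi> t)"
    unfolding solves_ode2_def by (subst eq) simp
qed

lemma solution_taylor_le:
  assumes "solves_ode2 F x x'"
  shows "\<bar>x t - x 0 - x' 0 * t\<bar> \<le> B * t\<^sup>2 / 2"
proof -
  have "\<bar>x t - x 0 - x' 0 * t\<bar> \<le> B * \<bar>t\<bar> ^ Suc (Suc 0) / (Suc 0 * Suc (Suc 0))"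
    by (rule abs_le_power_if_abs_deriv2_le[where u' = "\<lambda>s. x' s - x' 0" and u'' = "\<lambda>s. F s (x s)"])
       (use assms bounded_F in \<open>auto intro!: derivative_eq_intros simp: solves_ode2_def\<close>)
  then show ?thesis by (simp add: power2_eq_square)
qed

lemma solution_dist_le:
  assumes x: "solves_ode2 F x x'" and y: "solves_ode2 F y y'" and "x 0 = y 0" "0 \<le> t"
  shows "\<bar>x t - y t\<bar> \<le> \<bar>x' 0 - y' 0\<bar> * exp ((1 + L) * t)"
proof -
  define E where "E s = (x s - y s)\<^sup>2 + (x' s - y' s)\<^sup>2" for s
  define E' where "E' s = 2 * (x s - y s) * (x' s - y' s) + 2 * (x' s - y' s) * (F s (x s) - F s (y s))"
    for s
  have "E t \<le> E 0 * exp ((1 + L) * t)"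
  proof (rule differential_gronwall[of E E'])
    show "(E has_real_derivative E' s) (at s)" for s
      using x y unfolding solves_ode2_def E_def E'_def
      by (auto intro!: derivative_eq_intros simp: algebra_simps)
    show "E' s \<le> (1 + L) * E s" for s
    proof -
      define d e where "d = x s - y s" and "e = x' s - y' s"
      have "e * (F s (x s) - F s (y s)) \<le> \<bar>e\<bar> * \<bar>F s (x s) - F s (y s)\<bar>"
        using abs_ge_self[of "e * (F s (x s) - F s (y s))"] by (simp add: abs_mult)
      also have "\<dots> \<le> \<bar>e\<bar> * (L * \<bar>d\<bar>)"
        unfolding d_def by (rule mult_left_mono[OF lipschitz_F]) simp
      also have "\<dots> \<le> L * ((d\<^sup>2 + e\<^sup>2) / 2)"
        using sum_squares_bound[of "\<bar>d\<bar>" "\<bar>e\<bar>"] L_nonneg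
        by (simp add: mult_left_mono power2_eq_square ac_simps)
      finally have "e * (F s (x s) - F s (y s)) \<le> L * ((d\<^sup>2 + e\<^sup>2) / 2)" .
      moreover have "2 * d * e \<le> d\<^sup>2 + e\<^sup>2"
        using sum_squares_bound[of d e] by (simp add: power2_eq_square)
      ultimately show ?thesis
        unfolding E_def E'_def d_def[symmetric] e_def[symmetric] by (simp add: algebra_simps)
    qed
  qed fact
  moreover have "E 0 = (x' 0 - y' 0)\<^sup>2"
    using \<open>x 0 = y 0\<close> by (simp add: E_def)
  ultimately have "(x t - y t)\<^sup>2 \<le> (x' 0 - y' 0)\<^sup>2 * exp ((1 + L) * t)"
    unfolding E_def by (smt (verit) zero_le_power2)
  also have "\<dots> \<le> (x' 0 - y' 0)\<^sup>2 * (exp ((1 + L) * t))\<^sup>2"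
    using L_nonneg \<open>0 \<le> t\<close> by (intro mult_left_mono self_le_power) auto
  also have "\<dots> = ((x' 0 - y' 0) * exp ((1 + L) * t))\<^sup>2"
    by (simp add: power_mult_distrib)
  finally show ?thesis
    by (metis abs_exp_cancel abs_mult abs_le_square_iff)
qed

end

section \<open>The pendulum equation\<close>

definition pendulum :: "(real \<Rightarrow> real) \<Rightarrow> (real \<Rightarrow> real) \<Rightarrow> real \<Rightarrow> real \<Rightarrow> real" where
  "pendulum f h t x = f t * sin x - (1 + h t) * cos x"

lemma abs_lincomb_sin_cos_le: "\<bar>a * sin x + b * cos x\<bar> \<le> \<bar>a\<bar> + \<bar>b\<bar>" for a b x :: real
proof -
  have "\<bar>a * sin x\<bar> \<le> \<bar>a\<bar>" "\<bar>b * cos x\<bar> \<le> \<bar>b\<bar>"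
    by (auto simp: abs_mult intro: mult_left_le abs_sin_le_one abs_cos_le_one)
  then show ?thesis by linarith
qed

lemma lipschitz_ode_pendulum:
  fixes f h :: "real \<Rightarrow> real"
  assumes "continuous_on UNIV f" "continuous_on UNIV h"
    and f: "\<And>t. \<bar>f t\<bar> \<le> Mf" and h: "\<And>t. \<bar>h t\<bar> \<le> Mh"
  shows "lipschitz_ode (pendulum f h) (Mf + 1 + Mh) (Mf + 1 + Mh)"
  unfolding pendulum_def[abs_def]
proof
  show "continuous_on UNIV (\<lambda>(t, x). f t * sin x - (1 + h t) * cos x)"
    unfolding case_prod_beta
    by (intro continuous_intros continuous_on_compose2[OF assms(1)]
        continuous_on_compose2[OF assms(2)]) auto
  have le: "\<bar>f t\<bar> + \<bar>1 + h t\<bar> \<le> Mf + 1 + Mh" for t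
    using f[of t] h[of t] by linarith
  fix t x y :: real
  show "\<bar>f t * sin x - (1 + h t) * cos x - (f t * sin y - (1 + h t) * cos y)\<bar>
          \<le> (Mf + 1 + Mh) * \<bar>x - y\<bar>"
  proof -
    have "((\<lambda>x. f t * sin x - (1 + h t) * cos x) has_field_derivative
            (1 + h t) * sin z + f t * cos z) (at z within UNIV)" for z
      by (auto intro!: derivative_eq_intros simp: algebra_simps)
    moreover have "norm ((1 + h t) * sin z + f t * cos z) \<le> Mf + 1 + Mh" for z
      using abs_lincomb_sin_cos_le[of "1 + h t" z "f t"] le[of t] by simp
    ultimately show ?thesis
      using field_differentiable_bound[of UNIV _ _ "Mf + 1 + Mh" x y] by fastforce
  qed
  show "\<bar>f t * sin x - (1 + h t) * cos x\<bar> \<le> Mf + 1 + Mh"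
    using abs_lincomb_sin_cos_le[of "f t" x "- (1 + h t)"] le[of t] abs_minus_cancel[of "1 + h t"]
    by (simp add: algebra_simps)
qed

lemma solves_pendulum_reflect:
  assumes "solves_ode2 (pendulum f h) x x'"
  shows "solves_ode2 (pendulum (\<lambda>t. - f t) h) (\<lambda>t. pi - x t) (\<lambda>t. - x' t)"
  using assms unfolding solves_ode2_def pendulum_def
  by (auto intro!: derivative_eq_intros)

lemma abs_cos_minus_one_le: "\<bar>cos x - 1\<bar> \<le> \<bar>x\<bar>" for x :: real
proof -
  have "((\<lambda>x. cos x - 1) has_real_derivative - sin s) (at s)" for s
    by (auto intro!: derivative_eq_intros)
  then show ?thesis
    using abs_le_power_if_abs_deriv_le[of "\<lambda>x. cos x - 1" x "\<lambda>x. - sin x" 1 0] by simp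
qed

lemma pendulum_acceleration_neg:
  fixes a b y :: real
  assumes "\<bar>a\<bar> \<le> Mf" "\<bar>b\<bar> \<le> Mh" "\<bar>y\<bar> \<le> 2 * \<delta>" "\<delta> * (Mf + Mh + 1) \<le> 1/4"
  shows "a * sin y - (1 + b) * cos y + b < 0"
proof -
  have "a * sin y \<le> \<bar>a\<bar> * \<bar>sin y\<bar>"
    by (metis abs_ge_self abs_mult)
  also have "\<dots> \<le> Mf * (2 * \<delta>)"
    using abs_sin_x_le_abs_x[of y] assms by (intro mult_mono) auto
  finally have "a * sin y \<le> Mf * (2 * \<delta>)" .
  moreover have "b * (1 - cos y) \<le> \<bar>b\<bar> * \<bar>cos y - 1\<bar>"
    by (metis abs_ge_self abs_minus_commute abs_mult)
  moreover have "\<bar>b\<bar> * \<bar>cos y - 1\<bar> \<le> Mh * (2 * \<delta>)"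
    using abs_cos_minus_one_le[of y] assms by (intro mult_mono) auto
  moreover have "1 - cos y \<le> 2 * \<delta>"
    using abs_cos_minus_one_le[of y] assms by linarith
  ultimately have "a * sin y - (1 + b) * cos y + b \<le> 2 * (\<delta> * (Mf + Mh + 1)) - 1"
    by (simp add: algebra_simps)
  with assms show ?thesis by linarith
qed

lemma le_quarter_if_mult_le_quarter:
  fixes \<delta> M :: real
  assumes "0 < \<delta>" "0 \<le> M" "\<delta> * (M + 1) \<le> 1/4"
  shows "\<delta> \<le> 1/4"
  using mult_left_mono[of 1 "M + 1" \<delta>] assms by linarith

section \<open>Shooting in the initial velocity\<close>

definition exits_below :: "(real \<Rightarrow> real) \<Rightarrow> (real \<Rightarrow> real) \<Rightarrow> real \<Rightarrow> bool" where
  "exits_below x J \<delta> \<longleftrightarrow> (\<exists>t\<ge>0. x t + J t < \<delta> \<and> (\<forall>s\<in>{0..t}. x s - J s < pi - \<delta>))"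

lemma not_exits_below_both: "\<not> (exits_below x J \<delta> \<and> exits_below (\<lambda>t. pi - x t) J \<delta>)"
proof
  assume "exits_below x J \<delta> \<and> exits_below (\<lambda>t. pi - x t) J \<delta>"
  then obtain t1 t2 where
    "0 \<le> t1" "x t1 + J t1 < \<delta>" "\<forall>s\<in>{0..t1}. x s - J s < pi - \<delta>"
    "0 \<le> t2" "pi - x t2 + J t2 < \<delta>" "\<forall>s\<in>{0..t2}. pi - x s - J s < pi - \<delta>"
    unfolding exits_below_def by blast
  then show False by (cases "t1 \<le> t2") force+
qed

lemma pendulum_contact_is_crossing:
  assumes x: "solves_ode2 (pendulum f h) x x'"
    and J: "\<And>t. (J has_real_derivative J' t) (at t)" "\<And>t. (J' has_real_derivative h t) (at t)"
    and bounds: "\<And>t. \<bar>f t\<bar> \<le> Mf" "\<And>t. \<bar>h t\<bar> \<le> Mh" "\<And>t. \<bar>J t\<bar> \<le> \<delta> / 2"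
    and \<delta>: "0 < \<delta>" "\<delta> * (Mf + Mh + 1) \<le> 1/4"
    and t1: "0 < t1" "x t1 + J t1 = \<delta>" and before: "\<And>s. 0 \<le> s \<Longrightarrow> s < t1 \<Longrightarrow> \<delta> < x s + J s"
  obtains r where "0 < r" "x (t1 + r) + J (t1 + r) < \<delta>" "\<forall>s\<in>{t1..t1 + r}. x s \<le> 2 * \<delta>"
proof -
  have "isCont x t1" using x by (auto simp: solves_ode2_def intro: DERIV_isCont)
  then obtain e where e: "0 < e" "\<And>s. \<bar>s - t1\<bar> < e \<Longrightarrow> \<bar>x s - x t1\<bar> < \<delta> / 2"
    using \<delta>(1) unfolding continuous_at_eps_delta dist_real_def by (metis half_gt_zero)
  have near: "\<bar>x s\<bar> \<le> 2 * \<delta>" if "\<bar>s - t1\<bar> < e" for s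
    using e(2)[OF that] t1(2) bounds(3)[of t1] unfolding abs_le_iff abs_less_iff by linarith
  define r where "r = min e t1 / 2"
  have r: "0 < r" "r < e" "r < t1" using e t1 by (auto simp: r_def)
  have "(x (t1 + r) + J (t1 + r)) + (x (t1 - r) + J (t1 - r)) \<le> 2 * (x t1 + J t1)"
  proof (rule midpoint_le_if_deriv2_nonpos[where e = e and w' = "\<lambda>s. x' s + J' s"
        and w'' = "\<lambda>s. pendulum f h s (x s) + h s"])
    fix s assume "s \<in> ball t1 e"
    then have "\<bar>s - t1\<bar> < e" by (simp add: dist_real_def abs_minus_commute)
    then show "pendulum f h s (x s) + h s \<le> 0"
      unfolding pendulum_def
      using pendulum_acceleration_neg[OF bounds(1,2) near \<delta>(2)] by (simp add: less_imp_le)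
    show "((\<lambda>s. x s + J s) has_real_derivative x' s + J' s) (at s)"
      "((\<lambda>s. x' s + J' s) has_real_derivative pendulum f h s (x s) + h s) (at s)"
      using x J by (auto intro!: DERIV_add simp: solves_ode2_def)
  qed (use r in simp)
  moreover have "\<delta> < x (t1 - r) + J (t1 - r)" using before r by simp
  ultimately have "x (t1 + r) + J (t1 + r) < \<delta>" using t1(2) by argo
  moreover have "\<forall>s\<in>{t1..t1 + r}. x s \<le> 2 * \<delta>"
    using near r by (auto simp: abs_le_iff)
  ultimately show thesis using that r(1) by blast
qed

lemma exits_below_at_first_contact:
  assumes x: "solves_ode2 (pendulum f h) x x'"
    and J: "\<And>t. (J has_real_derivative J' t) (at t)" "\<And>t. (J' has_real_derivative h t) (at t)"
    and bounds: "\<And>t. \<bar>f t\<bar> \<le> Mf" "\<And>t. \<bar>h t\<bar> \<le> Mh" "\<And>t. \<bar>J t\<bar> \<le> \<delta> / 2"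
    and \<delta>: "0 < \<delta>" "\<delta> * (Mf + Mh + 1) \<le> 1/4"
    and t1: "0 < t1" "x t1 + J t1 \<le> \<delta>"
    and before: "\<And>s. 0 \<le> s \<Longrightarrow> s < t1 \<Longrightarrow> \<delta> < x s + J s \<and> x s - J s < pi - \<delta>"
  shows "exits_below x J \<delta>"
proof -
  have "\<delta> \<le> 1/4"
    using le_quarter_if_mult_le_quarter[of \<delta> "Mf + Mh"] bounds(1,2)[of 0] \<delta> by force
  obtain t2 where t2: "t1 \<le> t2" "x t2 + J t2 < \<delta>" "\<forall>s\<in>{t1..t2}. x s \<le> 2 * \<delta>"
  proof (cases "x t1 + J t1 < \<delta>")
    case True
    then show ?thesis using that[of t1] bounds(3)[of t1] by (auto simp: abs_le_iff)
  next
    case False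
    with t1 have "x t1 + J t1 = \<delta>" by simp
    with before obtain r where "0 < r" "x (t1 + r) + J (t1 + r) < \<delta>" "\<forall>s\<in>{t1..t1 + r}. x s \<le> 2 * \<delta>"
      using pendulum_contact_is_crossing[OF x J bounds \<delta> t1(1)] by blast
    then show ?thesis using that[of "t1 + r"] by simp
  qed
  show ?thesis
    unfolding exits_below_def
  proof (intro exI[of _ t2] conjI ballI)
    fix s assume s: "s \<in> {0..t2}"
    show "x s - J s < pi - \<delta>"
    proof (cases "s < t1")
      case True then show ?thesis using before s by simp
    next
      case False
      then have "x s \<le> 2 * \<delta>" using s t2(3) by simp
      then show ?thesis using bounds(3)[of s] \<open>\<delta> \<le> 1/4\<close> pi_gt3 by (auto simp: abs_le_iff)
    qed
  qed (use t1 t2 in auto)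
qed

lemma open_exits_below:
  fixes y :: "real \<Rightarrow> real \<Rightarrow> real"
  assumes dep: "\<And>v w s. 0 \<le> s \<Longrightarrow> \<bar>y w s - y v s\<bar> \<le> \<bar>w - v\<bar> * exp (K * s)"
    and cont: "\<And>v. continuous_on UNIV (y v)" "continuous_on UNIV J"
  shows "open {v. exits_below (y v) J \<delta>}"
proof (rule openI)
  fix v assume "v \<in> {v. exits_below (y v) J \<delta>}"
  then obtain t where t: "0 \<le> t" "y v t + J t < \<delta>" "\<forall>s\<in>{0..t}. y v s - J s < pi - \<delta>"
    by (auto simp: exits_below_def)
  have "continuous_on {0..t} (\<lambda>s. y v s - J s)"
    by (intro continuous_intros continuous_on_subset[OF cont(1)] continuous_on_subset[OF cont(2)]) auto
  then have "\<exists>m\<in>{0..t}. \<forall>s\<in>{0..t}. y v s - J s \<le> y v m - J m"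
    using t(1) by (intro continuous_attains_sup) auto
  then obtain m where m: "m \<in> {0..t}" "\<forall>s\<in>{0..t}. y v s - J s \<le> y v m - J m"
    by blast
  define \<eta> where "\<eta> = min (\<delta> - (y v t + J t)) (pi - \<delta> - (y v m - J m))"
  have "0 < \<eta>" using t m by (auto simp: \<eta>_def)
  have close: "\<bar>y w s - y v s\<bar> < \<eta>" if s: "s \<in> {0..t}" and w: "w \<in> ball v (\<eta> / exp (\<bar>K\<bar> * t))"
    for s w
  proof -
    have "K * s \<le> \<bar>K\<bar> * s" using s by (intro mult_right_mono) auto
    also have "\<dots> \<le> \<bar>K\<bar> * t" using s by (intro mult_left_mono) auto
    finally have "exp (K * s) \<le> exp (\<bar>K\<bar> * t)" by simp
    then have "\<bar>y w s - y v s\<bar> \<le> \<bar>w - v\<bar> * exp (\<bar>K\<bar> * t)"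
      using dep[of s w v] s by (smt (verit) abs_ge_zero mult_left_mono atLeastAtMost_iff)
    also have "\<dots> < \<eta>"
      using w by (simp add: dist_real_def abs_minus_commute pos_less_divide_eq)
    finally show ?thesis .
  qed
  show "\<exists>e>0. ball v e \<subseteq> {v. exits_below (y v) J \<delta>}"
  proof (intro exI conjI subsetI)
    show "0 < \<eta> / exp (\<bar>K\<bar> * t)" using \<open>0 < \<eta>\<close> by simp
    fix w assume w: "w \<in> ball v (\<eta> / exp (\<bar>K\<bar> * t))"
    show "w \<in> {v. exits_below (y v) J \<delta>}"
      unfolding mem_Collect_eq exits_below_def
    proof (intro exI[of _ t] conjI ballI)
      have "\<eta> \<le> \<delta> - (y v t + J t)" by (simp add: \<eta>_def)
      then show "y w t + J t < \<delta>" using close[OF _ w, of t] t(1) by (simp add: abs_less_iff)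
      fix s assume s: "s \<in> {0..t}"
      have "\<eta> \<le> pi - \<delta> - (y v m - J m)" by (simp add: \<eta>_def)
      then show "y w s - J s < pi - \<delta>" using close[OF s w] m(2)[rule_format, OF s]
        by (simp add: abs_less_iff)
    qed (use t in simp)
  qed
qed

lemma exits_below_if_fast_descent:
  fixes y J :: "real \<Rightarrow> real"
  assumes taylor: "\<And>t. \<bar>y t - pi / 2 + 3 * (K + 1) * t\<bar> \<le> K * t\<^sup>2 / 2"
    and "0 \<le> K" and J: "\<And>t. \<bar>J t\<bar> \<le> \<delta> / 2" and "\<delta> \<le> 1/4"
  shows "exits_below y J \<delta>"
proof -
  define t0 where "t0 = 1 / (K + 1)"
  have t0: "0 < t0" "(K + 1) * t0 = 1" using \<open>0 \<le> K\<close> by (auto simp: t0_def)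
  have small: "K * s\<^sup>2 \<le> 1" if "0 \<le> s" "s \<le> t0" for s
  proof -
    have "K * s\<^sup>2 \<le> ((K + 1) * s) * ((K + 1) * s)"
      using that \<open>0 \<le> K\<close> by (simp add: power2_eq_square algebra_simps mult_right_mono)
    also have "\<dots> \<le> 1 * 1"
      using that t0 \<open>0 \<le> K\<close> mult_left_mono[of s t0 "K + 1"] by (intro mult_mono) auto
    finally show ?thesis by simp
  qed
  have y: "y s \<le> pi / 2 - 3 * ((K + 1) * s) + 1 / 2" if "0 \<le> s" "s \<le> t0" for s
    using taylor[of s] small[OF that] unfolding abs_le_iff by (simp add: algebra_simps)
  have "y t0 \<le> pi / 2 - 5 / 2" using y[of t0] t0 by simp
  moreover have "\<forall>s\<in>{0..t0}. y s \<le> pi / 2 + 1 / 2"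
    using y \<open>0 \<le> K\<close> by (smt (verit) atLeastAtMost_iff zero_le_mult_iff)
  ultimately show ?thesis
    unfolding exits_below_def
  proof (intro exI[of _ t0] conjI ballI)
    assume "y t0 \<le> pi / 2 - 5 / 2"
    then show "y t0 + J t0 < \<delta>"
      using J[of t0] pi_less_4 unfolding abs_le_iff by linarith
    fix s assume "\<forall>s\<in>{0..t0}. y s \<le> pi / 2 + 1 / 2" "s \<in> {0..t0}"
    then show "y s - J s < pi - \<delta>"
      using J[of s] \<open>\<delta> \<le> 1/4\<close> pi_gt3 unfolding abs_le_iff by fastforce
  qed (use t0 in simp)
qed

lemma pendulum_in_strip_if_not_exits:
  assumes x: "solves_ode2 (pendulum f h) x x'" and "x 0 = pi / 2"
    and J: "\<And>t. (J has_real_derivative J' t) (at t)" "\<And>t. (J' has_real_derivative h t) (at t)"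
    and bounds: "\<And>t. \<bar>f t\<bar> \<le> Mf" "\<And>t. \<bar>h t\<bar> \<le> Mh" "\<And>t. \<bar>J t\<bar> \<le> \<delta> / 2"
    and \<delta>: "0 < \<delta>" "\<delta> * (Mf + Mh + 1) \<le> 1/4"
    and "\<not> exits_below x J \<delta>" "\<not> exits_below (\<lambda>t. pi - x t) J \<delta>" and "0 \<le> t"
  shows "0 < x t \<and> x t < pi"
proof -
  have "\<delta> \<le> 1/4"
    using le_quarter_if_mult_le_quarter[of \<delta> "Mf + Mh"] bounds(1,2)[of 0] \<delta> by force
  let ?P = "\<lambda>t. x t + J t \<le> \<delta> \<or> pi - \<delta> \<le> x t - J t"
  have "\<not> ?P t"
  proof
    assume "?P t"
    have "continuous_on UNIV x" "continuous_on UNIV J"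
      using continuous_on_solves_ode2[OF x] continuous_on_if_derivative[OF J(1)] by auto
    then have "closed {t. ?P t}"
      unfolding Collect_disj_eq by (intro closed_Un closed_Collect_le continuous_intros)
    moreover have "\<not> ?P 0"
      using \<open>x 0 = pi / 2\<close> bounds(3)[of 0] \<open>\<delta> \<le> 1/4\<close> pi_gt3 unfolding abs_le_iff by auto
    ultimately obtain t1 where t1: "0 < t1" "?P t1" and "\<And>s. 0 \<le> s \<Longrightarrow> s < t1 \<Longrightarrow> \<not> ?P s"
      using first_hitting_time[of ?P t] \<open>0 \<le> t\<close> \<open>?P t\<close> by blast
    then have before: "\<And>s. 0 \<le> s \<Longrightarrow> s < t1 \<Longrightarrow> \<delta> < x s + J s \<and> x s - J s < pi - \<delta>"
      by (simp add: not_le)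
    from t1(2) show False
    proof
      assume "x t1 + J t1 \<le> \<delta>"
      with before have "exits_below x J \<delta>"
        by (intro exits_below_at_first_contact[OF x J bounds \<delta> t1(1)])
      with assms show False by blast
    next
      assume "pi - \<delta> \<le> x t1 - J t1"
      with before have "exits_below (\<lambda>t. pi - x t) J \<delta>"
        by (intro exits_below_at_first_contact[OF solves_pendulum_reflect[OF x] J _ bounds(2,3) \<delta> t1(1)])
          (auto simp: bounds(1) dest: before)
      with assms show False by blast
    qed
  qed
  with bounds(3)[of t] \<delta>(1) show ?thesis unfolding abs_le_iff by auto
qed

lemma pendulum_solution_in_strip:
  fixes f h J J' :: "real \<Rightarrow> real"
  assumes "continuous_on UNIV f" "continuous_on UNIV h"
    and J: "\<And>t. (J has_real_derivative J' t) (at t)" "\<And>t. (J' has_real_derivative h t) (at t)"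
    and bounds: "\<And>t. \<bar>f t\<bar> \<le> Mf" "\<And>t. \<bar>h t\<bar> \<le> Mh" "\<And>t. \<bar>J t\<bar> \<le> \<delta> / 2"
    and \<delta>: "0 < \<delta>" "\<delta> * (Mf + Mh + 1) \<le> 1/4"
  shows "\<exists>x x'. solves_ode2 (pendulum f h) x x' \<and> (\<forall>t\<ge>0. 0 < x t \<and> x t < pi)"
proof -
  define K where "K = Mf + 1 + Mh"
  interpret lipschitz_ode "pendulum f h" K K
    unfolding K_def by (rule lipschitz_ode_pendulum) fact+
  have "\<forall>v. \<exists>x x'. x 0 = pi / 2 \<and> x' 0 = v \<and> solves_ode2 (pendulum f h) x x'"
    using solution_exists by blast
  then obtain xs xs' where sol: "\<And>v. xs v 0 = pi / 2" "\<And>v. xs' v 0 = v"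
      "\<And>v. solves_ode2 (pendulum f h) (xs v) (xs' v)"
    by metis
  have cont: "continuous_on UNIV (xs v)" "continuous_on UNIV J" for v
    using continuous_on_solves_ode2[OF sol(3)] continuous_on_if_derivative[OF J(1)] by auto
  have dist: "\<bar>xs w s - xs v s\<bar> \<le> \<bar>w - v\<bar> * exp ((1 + K) * s)" if "0 \<le> s" for v w s
    using solution_dist_le[OF sol(3) sol(3) _ that] sol(1,2) by simp
  have taylor: "\<bar>xs v t - pi / 2 - v * t\<bar> \<le> K * t\<^sup>2 / 2" for v t
    using solution_taylor_le[OF sol(3)] sol(1,2) by simp
  define V where "V = 3 * (K + 1)"
  let ?A = "{v. exits_below (xs v) J \<delta>}" and ?B = "{v. exits_below (\<lambda>t. pi - xs v t) J \<delta>}"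
  have "open ?A" by (rule open_exits_below[OF dist cont])
  moreover have "open ?B"
    by (rule open_exits_below[where K = "1 + K"])
       (use dist cont in \<open>auto intro!: continuous_intros simp: abs_minus_commute\<close>)
  moreover have "?A \<inter> ?B = {}" using not_exits_below_both by blast
  moreover have "- V \<in> ?A" "V \<in> ?B"
  proof -
    have "0 \<le> K" using bounds(1,2)[of 0] by (simp add: K_def)
    moreover have "\<delta> \<le> 1/4"
      using le_quarter_if_mult_le_quarter[of \<delta> "Mf + Mh"] bounds(1,2)[of 0] \<delta> by force
    ultimately have descent: "exits_below y J \<delta>"
      if "\<And>t. \<bar>y t - pi / 2 + V * t\<bar> \<le> K * t\<^sup>2 / 2" for y
      using exits_below_if_fast_descent[of y K J \<delta>] that bounds(3) by (simp add: V_def)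
    have "\<bar>xs (- V) t - pi / 2 + V * t\<bar> \<le> K * t\<^sup>2 / 2" for t
      using taylor[of "- V" t] by simp
    then show "- V \<in> ?A" by (simp add: descent)
    have "\<bar>(pi - xs V t) - pi / 2 + V * t\<bar> \<le> K * t\<^sup>2 / 2" for t
    proof -
      have "(pi - xs V t) - pi / 2 + V * t = - (xs V t - pi / 2 - V * t)" by simp
      then show ?thesis using taylor[of V t] by (simp only: abs_minus_cancel)
    qed
    then show "V \<in> ?B" by (simp add: descent)
  qed
  ultimately obtain v where "v \<notin> ?A" "v \<notin> ?B"
    using connectedD[OF connected_UNIV, of ?A ?B] by blast
  then have "\<forall>t\<ge>0. 0 < xs v t \<and> xs v t < pi"
    using pendulum_in_strip_if_not_exits[OF sol(3) sol(1) J bounds \<delta>] by simp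
  with sol(3) show ?thesis by blast
qed

section \<open>Averaging the fast forcing\<close>

lemma continuous_on_if_smooth_fun: "smooth_fun f \<Longrightarrow> continuous_on UNIV f"
  unfolding smooth_fun_def
  by (metis continuous_at_imp_continuous_on differentiable_imp_continuous_within funpow_0)

lemma periodic_shift_nat:
  assumes "\<And>t. g (t + T) = g t"
  shows "g (t + real n * T) = g t"
proof (induction n)
  case (Suc n)
  have "g (t + real (Suc n) * T) = g ((t + real n * T) + T)" by (simp add: algebra_simps)
  with assms Suc show ?case by simp
qed simp

lemma periodic_continuous_bounded:
  fixes g :: "real \<Rightarrow> real"
  assumes "continuous_on UNIV g" "\<And>t. g (t + T) = g t" "0 < T"
  obtains M where "\<And>t. \<bar>g t\<bar> \<le> M"
proof -
  obtain M where M: "\<And>s. s \<in> {0..T} \<Longrightarrow> \<bar>g s\<bar> \<le> M"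
    using compact_imp_bounded[OF compact_continuous_image[OF continuous_on_subset[OF assms(1)]]]
    by (fastforce simp: bounded_iff)
  have "\<bar>g t\<bar> \<le> M" for t
  proof -
    define k where "k = \<lfloor>t / T\<rfloor>"
    define s where "s = t - k * T"
    have "k \<le> t / T" "t / T < k + 1" unfolding k_def by linarith+
    with \<open>0 < T\<close> have s: "s \<in> {0..T}" by (auto simp: s_def field_simps)
    have "g t = g s"
    proof (cases "0 \<le> k")
      case True
      then show ?thesis using periodic_shift_nat[of g T, OF assms(2), of s "nat k"] by (simp add: s_def)
    next
      case False
      then show ?thesis using periodic_shift_nat[of g T, OF assms(2), of t "nat (- k)"] by (simp add: s_def)
    qed
    with M s show ?thesis by simp
  qed
  then show thesis by (rule that)
qed

lemma periodic_if_deriv_periodic: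
  fixes u u' :: "real \<Rightarrow> real"
  assumes u: "\<And>t. (u has_real_derivative u' t) (at t)"
    and "\<And>t. u' (t + T) = u' t" "u T = u 0"
  shows "u (t + T) = u t"
proof -
  have "((\<lambda>s. u (s + T) - u s) has_real_derivative 0) (at s)" for s
    using DERIV_diff[OF DERIV_shift[THEN iffD1, OF u[of "s + T"]] u[of s]] assms(2)[of s] by simp
  then have "u (t + T) - u t = u (0 + T) - u 0"
    by (rule DERIV_isconst_all[where f = "\<lambda>s. u (s + T) - u s", rule_format])
  with assms(3) show ?thesis by simp
qed

lemma zero_mean_periodic_bounded_second_primitive:
  fixes g :: "real \<Rightarrow> real"
  assumes g: "continuous_on UNIV g" and per: "\<And>t. g (t + T) = g t"
    and "0 < T" and mean: "integral {0..T} g = 0"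
  obtains G G' M where "\<And>t. (G has_real_derivative G' t) (at t)"
    "\<And>t. (G' has_real_derivative g t) (at t)" "\<And>t. \<bar>G t\<bar> \<le> M"
proof -
  have dG1: "(primitive g has_real_derivative g t) (at t)" for t
    by (rule has_real_derivative_primitive[OF g])
  have "(g has_integral (primitive g T - primitive g 0)) {0..T}"
    using \<open>0 < T\<close> dG1
    by (intro fundamental_theorem_of_calculus)
       (auto simp: has_real_derivative_iff_has_vector_derivative[symmetric] intro: DERIV_subset)
  with mean have "primitive g T = primitive g 0" by (simp add: integral_unique)
  then have per1: "primitive g (t + T) = primitive g t" for t
    by (rule periodic_if_deriv_periodic[OF dG1 per])
  have cont1: "continuous_on UNIV (primitive g)" by (rule continuous_on_primitive[OF g])
  define m where "m = primitive (primitive g) T / T"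
  define G where "G t = primitive (primitive g) t - m * t" for t
  have dG: "(G has_real_derivative primitive g t - m) (at t)" for t
    unfolding G_def by (auto intro!: derivative_eq_intros has_real_derivative_primitive cont1)
  have "G (t + T) = G t" for t
    by (rule periodic_if_deriv_periodic[OF dG]) (use per1 \<open>0 < T\<close> in \<open>simp_all add: G_def m_def\<close>)
  moreover have "continuous_on UNIV G"
    by (rule continuous_on_if_derivative[OF dG])
  ultimately obtain M where "\<And>t. \<bar>G t\<bar> \<le> M"
    using periodic_continuous_bounded \<open>0 < T\<close> by metis
  moreover have "((\<lambda>t. primitive g t - m) has_real_derivative g t) (at t)" for t
    using dG1 by (auto intro!: derivative_eq_intros)
  ultimately show thesis using that[OF dG] by blast
qed

lemma pendulum_rescaled_forcing_in_strip:
  fixes f g G G' :: "real \<Rightarrow> real"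
  assumes "continuous_on UNIV f" "continuous_on UNIV g"
    and f: "\<And>t. \<bar>f t\<bar> \<le> Mf" and g: "\<And>t. \<bar>g t\<bar> \<le> Mg"
    and G: "\<And>t. (G has_real_derivative G' t) (at t)" "\<And>t. (G' has_real_derivative g t) (at t)"
      "\<And>t. \<bar>G t\<bar> \<le> M"
    and \<delta>: "0 < \<delta>" "\<delta> * (Mf + Mg + 1) \<le> 1/4"
    and lam: "0 < lam" "M \<le> lam\<^sup>2 * \<delta> / 2"
  shows "\<exists>x x'. solves_ode2 (pendulum f (\<lambda>t. g (lam * t))) x x' \<and> (\<forall>t\<ge>0. 0 < x t \<and> x t < pi)"
proof (rule pendulum_solution_in_strip[OF assms(1) _ _ _ f g _ \<delta>])
  show "continuous_on UNIV (\<lambda>t. g (lam * t))"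
    by (rule continuous_on_compose2[OF assms(2)]) (auto intro!: continuous_intros)
  fix t
  have "((\<lambda>t. G (lam * t)) has_real_derivative G' (lam * t) * lam) (at t)"
    by (rule DERIV_chain2[OF G(1)]) (auto intro!: derivative_eq_intros)
  then show "((\<lambda>t. G (lam * t) / lam\<^sup>2) has_real_derivative G' (lam * t) / lam) (at t)"
    using lam by (auto dest: DERIV_cdivide[where c = "lam\<^sup>2"] simp: power2_eq_square)
  have "((\<lambda>t. G' (lam * t)) has_real_derivative g (lam * t) * lam) (at t)"
    by (rule DERIV_chain2[OF G(2)]) (auto intro!: derivative_eq_intros)
  then show "((\<lambda>t. G' (lam * t) / lam) has_real_derivative g (lam * t)) (at t)"
    using lam by (auto dest: DERIV_cdivide[where c = lam])
  have "\<bar>G (lam * t)\<bar> / lam\<^sup>2 \<le> M / lam\<^sup>2"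
    using G(3) lam by (simp add: divide_right_mono)
  also have "\<dots> \<le> \<delta> / 2" using lam by (simp add: field_simps)
  finally show "\<bar>G (lam * t) / lam\<^sup>2\<bar> \<le> \<delta> / 2" by (simp add: abs_divide)
qed

lemma pendulum_fast_zero_mean_forcing_in_strip:
  fixes f g :: "real \<Rightarrow> real"
  assumes "continuous_on UNIV f" "\<And>t. \<bar>f t\<bar> \<le> Mf"
    and g: "continuous_on UNIV g" "\<And>t. g (t + T) = g t" "0 < T" "integral {0..T} g = 0"
  shows "\<exists>lam0>0. \<forall>lam\<ge>lam0. \<exists>x x'.
           solves_ode2 (pendulum f (\<lambda>t. g (lam * t))) x x' \<and> (\<forall>t\<ge>0. 0 < x t \<and> x t < pi)"
proof -
  obtain Mg where Mg: "\<And>t. \<bar>g t\<bar> \<le> Mg"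
    using periodic_continuous_bounded[OF g(1-3)] by blast
  obtain G G' M where G: "\<And>t. (G has_real_derivative G' t) (at t)"
    "\<And>t. (G' has_real_derivative g t) (at t)" "\<And>t. \<bar>G t\<bar> \<le> M"
    using zero_mean_periodic_bounded_second_primitive[OF g] by blast
  define \<delta> where "\<delta> = 1 / (4 * (Mf + Mg + 1))"
  have "0 \<le> Mf" "0 \<le> Mg" "0 \<le> M" using assms(2)[of 0] Mg[of 0] G(3)[of 0] by auto
  then have \<delta>: "0 < \<delta>" "\<delta> * (Mf + Mg + 1) \<le> 1/4" and "0 \<le> 2 * M / \<delta>"
    by (simp_all add: \<delta>_def)
  show ?thesis
  proof (intro exI[of _ "2 * M / \<delta> + 1"] conjI allI impI)
    show "0 < 2 * M / \<delta> + 1" using \<open>0 \<le> 2 * M / \<delta>\<close> by linarith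
    fix lam assume "2 * M / \<delta> + 1 \<le> lam"
    with \<open>0 \<le> 2 * M / \<delta>\<close> have "1 \<le> lam" "2 * M / \<delta> \<le> lam\<^sup>2"
      using self_le_power[of lam 2] by linarith+
    with \<delta> have "0 < lam" "M \<le> lam\<^sup>2 * \<delta> / 2" by (simp_all add: field_simps)
    then show "\<exists>x x'. solves_ode2 (pendulum f (\<lambda>t. g (lam * t))) x x' \<and> (\<forall>t\<ge>0. 0 < x t \<and> x t < pi)"
      by (rule pendulum_rescaled_forcing_in_strip[OF assms(1) g(1) assms(2) Mg G \<delta>])
  qed
qed

theorem theorem3p1:
  fixes f g :: "real \<Rightarrow> real" and T :: real
  assumes f_smooth: "smooth_fun f"
    and f_bdd: "bounded (range f)"
    and df_bdd: "bounded (range (deriv f))"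
    and g_smooth: "smooth_fun g"
    and T_pos: "T > 0"
    and g_periodic: "\<forall>t. g (t + T) = g t"
    and g_mean: "(1 / T) * integral {0..T} g = 0"
  shows "\<exists>lam0 > 0. \<forall>lam \<ge> lam0. \<exists>x x' :: real \<Rightarrow> real.
           (\<forall>t. (x has_real_derivative x' t) (at t)) \<and>
           (\<forall>t. (x' has_real_derivative
                   (f t * sin (x t) - (1 + g (lam * t)) * cos (x t))) (at t)) \<and>
           (\<forall>t > 0. 0 < x t \<and> x t < pi)"
proof -
  have cont: "continuous_on UNIV f" "continuous_on UNIV g"
    using f_smooth g_smooth by (simp_all add: continuous_on_if_smooth_fun)
  obtain Mf where "\<And>t. \<bar>f t\<bar> \<le> Mf" using f_bdd by (auto simp: bounded_iff)
  moreover have "integral {0..T} g = 0" using g_mean T_pos by simp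
  ultimately obtain lam0 where "0 < lam0" and strip: "\<And>lam. lam0 \<le> lam \<Longrightarrow> \<exists>x x'.
      solves_ode2 (pendulum f (\<lambda>t. g (lam * t))) x x' \<and> (\<forall>t\<ge>0. 0 < x t \<and> x t < pi)"
    using pendulum_fast_zero_mean_forcing_in_strip[OF cont(1) _ cont(2) g_periodic[rule_format] T_pos]
    by blast
  show ?thesis
    by (intro exI[of _ lam0] conjI allI impI \<open>0 < lam0\<close>)
       (use strip in \<open>fastforce simp: solves_ode2_def pendulum_def\<close>)
qed
end
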